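(* Let $(H,T)$ be a coupling time with ambiguities of finite width for the interacting particle system described in the context, and assume that $\Lambda_T(\lambda)=\mathbb{E}[e^{-\lambda T}]$ is finite for some $\lambda>0$. Then $\Lambda_H(\lambda')$ is finite for every $\lambda'<\lambda$.
   Context: Let $S$ be a finite set and $\mathfrak{J}$ a finite index set; for each $i\in\mathfrak{J}$ fix a finite $A_i\subset\mathbb{Z}$, $\ell_i\subset S^{A_i}$, $s_i\in S$, $r_i\ge0$. Graphical construction: on $(\Omega,\mathcal{F},\mathbb{P})$, independent Poisson processes $\Psi(x,i)$ on $(-\infty,0)$ with rates $r_i$, points $0>\Psi(x,i,1)>\Psi(x,i,2)>\cdots$; $\mathcal{F}(x,i)=\sigma(\Psi(x,i))$. Starting from $\xi\in S^{\mathbb{Z}}$ at time $u<0$, at each point $t=\Psi(x,i,k)>u$, if the configuration just before $t$ restricted to $x+A_i$ lies in $\ell_i$ (always if $A_i=\emptyset$), site $x$ is set to $s_i$ (the point is "performed"). $\Phi(\xi,u,0^-,0)$ is the state of site $0$ just before time $0$; $\mathrm{Perf}(\xi,u,x,i,k)$ indicates whether $\Psi(x,i,k)$ is performed. For a random time $U\le0$, $\mathcal{F}^+(U)$ is generated by the numbers of points of each $\Psi(x,i)$ in $[U,0)$ and their positions. A coupling time with ambiguities is a pair $(H,T)$ ($H=\{H(x,i,k)\}$ $\{0,1\}$-valued, $T$ real) with: (1) $T\in(-\infty,0)$ a.s.; (2) a.s. finitely many $H(x,i,k)\ne0$; (3) a.s. $H(x,i,k)=0$ if $\Psi(x,i,k)<T$;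 (4) $H(x,i,k)$ is $\mathcal{F}^+(\Psi(x,i,k))$-measurable; (5) a.s., for all $t<T$ and $\xi,\xi'$, equality of $\mathrm{Perf}(\cdot,t,x,i,k)H(x,i,k)$ for all $(x,i,k)$ implies $\Phi(\xi,t,0^-,0)=\Phi(\xi',t,0^-,0)$. Its width is bounded by nonnegative integers $(a_-,a_+)$ if: (i) $H$ is measurable w.r.t. $\sigma(\mathcal{F}(x,i);-a_-\le x\le a_+,i\in\mathfrak{J})$; (ii) a.s., $H(x,i,k)=1$ implies $x+A_i\subset[-a_-,a_+]$; (iii) there is a map $\Theta$ on $\Omega\times\{0,1\}^{\mathbb{Z}\times\mathfrak{J}\times\{1,2,\dots\}}$ with values in $S$, measurable w.r.t. $\sigma(\mathcal{F}(x,i);-a_-\le x\le a_+)\otimes$(product $\sigma$-algebra), with $\Phi(\xi,t,0^-,0)=\Theta(\Psi,(\mathrm{Perf}(\xi,t,x,i,k)H(x,i,k))_{x,i,k})$ a.s. for all $t<T$, $\xi$. Finite width means bounded by some such pair. $\Lambda_H(\lambda)=\mathbb{E}[\sum_{x,i,k}(\#A_i)e^{-\lambda\Psi(x,i,k)}H(x,i,k)]$. *)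

theory Defs
  imports "HOL-Probability.Probability"
begin

text \<open>For a process of rate r i > 0 the points are
  Psi(x,i,k) = -(G(x,i,0)+...+G(x,i,k)) with independent Exp(r i) gaps G; k = 0,1,2,...
  corresponds to the paper's k = 1,2,3,...  A process of rate 0 has no points; its
  (non-existent) points are encoded as -infinity.\<close>

definition pts :: "('j \<Rightarrow> real) \<Rightarrow> ('w \<Rightarrow> int \<Rightarrow> 'j \<Rightarrow> nat \<Rightarrow> real) \<Rightarrow> 'w \<Rightarrow> int \<Rightarrow> 'j \<Rightarrow> nat \<Rightarrow> ereal" where
  "pts r G w x i k = (if r i = 0 then MInfty else ereal (- (\<Sum>m\<le>k. G w x i m)))"

definition poisson_family :: "'w measure \<Rightarrow> ('j \<Rightarrow> real) \<Rightarrow> ('w \<Rightarrow> int \<Rightarrow> 'j \<Rightarrow> nat \<Rightarrow> real) \<Rightarrow> bool" where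
  "poisson_family M r G \<longleftrightarrow>
     prob_space.indep_vars M (\<lambda>_. borel) (\<lambda>(x,i,k) w. G w x i k) {(x,i,k). r i > 0} \<and>
     (\<forall>x i k. r i > 0 \<longrightarrow> distributed M lborel (\<lambda>w. G w x i k) (exponential_density (r i)))"

text \<open>Space-time history of the graphical construction started from xi at time u
  (for one fixed realisation Psi of the point processes): zeta y t is the state of site y
  just before time t, for u < t \<le> 0.\<close>

definition consistent ::
  "('j \<Rightarrow> int set) \<Rightarrow> ('j \<Rightarrow> (int \<Rightarrow> 's) set) \<Rightarrow> ('j \<Rightarrow> 's) \<Rightarrow> (int \<Rightarrow> 'j \<Rightarrow> nat \<Rightarrow> ereal)
    \<Rightarrow> (int \<Rightarrow> 's) \<Rightarrow> real \<Rightarrow> (int \<Rightarrow> real \<Rightarrow> 's) \<Rightarrow> bool" where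
  "consistent A ell s P xi u zeta \<longleftrightarrow>
     (\<forall>y t. (t \<le> u \<or> 0 < t) \<longrightarrow> zeta y t = xi y) \<and>
     (\<forall>y t. u < t \<and> t \<le> 0 \<longrightarrow>
        (let Q = {(i,k). ereal u < P y i k \<and> P y i k < ereal t} in
          (Q = {} \<longrightarrow> zeta y t = xi y) \<and>
          (\<forall>(i,k)\<in>Q. (\<forall>(i',k')\<in>Q. (i',k') \<noteq> (i,k) \<longrightarrow> P y i' k' < P y i k) \<longrightarrow>
             zeta y t =
               (if A i = {} \<or> restrict (\<lambda>a. zeta (y + a) (real_of_ereal (P y i k))) (A i) \<in> ell i
                then s i else zeta y (real_of_ereal (P y i k))))))"

definition hist where
  "hist A ell s P xi u = (THE zeta. consistent A ell s P xi u zeta)"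

text \<open>Phi(xi,u,0^-,0): state of site 0 just before time 0.\<close>
definition Phi where
  "Phi A ell s P xi u = hist A ell s P xi u 0 0"

definition Perf where
  "Perf A ell s P xi u x i k \<longleftrightarrow>
     ereal u < P x i k \<and> P x i k < 0 \<and>
     (A i = {} \<or> restrict (\<lambda>a. hist A ell s P xi u (x + a) (real_of_ereal (P x i k))) (A i) \<in> ell i)"

text \<open>F^+(U): generated by the numbers and positions of the points in [U,0) of every
  process (points outside [U,0) are replaced by -infinity).\<close>
definition Fplus :: "'w measure \<Rightarrow> ('w \<Rightarrow> int \<Rightarrow> 'j \<Rightarrow> nat \<Rightarrow> ereal) \<Rightarrow> ('w \<Rightarrow> ereal) \<Rightarrow> 'w measure" where
  "Fplus M Psi U = vimage_algebra (space M)
     (\<lambda>w (x,i,k). if U w \<le> Psi w x i k then Psi w x i k else MInfty)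
     (Pi\<^sub>M UNIV (\<lambda>_. borel))"

definition Fwin :: "'w measure \<Rightarrow> ('w \<Rightarrow> int \<Rightarrow> 'j \<Rightarrow> nat \<Rightarrow> ereal) \<Rightarrow> nat \<Rightarrow> nat \<Rightarrow> 'w measure" where
  "Fwin M Psi am ap = vimage_algebra (space M)
     (\<lambda>w. restrict (\<lambda>(x,i,k). Psi w x i k) {(x,i,k). - int am \<le> x \<and> x \<le> int ap})
     (Pi\<^sub>M {(x,i,k). - int am \<le> x \<and> x \<le> int ap} (\<lambda>_. borel))"

definition coupling_time_amb ::
  "'w measure \<Rightarrow> ('j \<Rightarrow> int set) \<Rightarrow> ('j \<Rightarrow> (int \<Rightarrow> 's) set) \<Rightarrow> ('j \<Rightarrow> 's)
    \<Rightarrow> ('w \<Rightarrow> int \<Rightarrow> 'j \<Rightarrow> nat \<Rightarrow> ereal) \<Rightarrow> ('w \<Rightarrow> int \<Rightarrow> 'j \<Rightarrow> nat \<Rightarrow> bool) \<Rightarrow> ('w \<Rightarrow> real) \<Rightarrow> bool" where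
  "coupling_time_amb M A ell s Psi H T \<longleftrightarrow>
     T \<in> borel_measurable M \<and>
     (AE w in M. T w < 0) \<and>
     (AE w in M. finite {(x,i,k). H w x i k}) \<and>
     (AE w in M. \<forall>x i k. Psi w x i k < ereal (T w) \<longrightarrow> \<not> H w x i k) \<and>
     (\<forall>x i k. (\<lambda>w. H w x i k) \<in> measurable (Fplus M Psi (\<lambda>w. Psi w x i k)) (count_space UNIV)) \<and>
     (AE w in M. \<forall>t < T w. \<forall>xi xi'.
        (\<forall>x i k. (Perf A ell s (Psi w) xi t x i k \<and> H w x i k) = (Perf A ell s (Psi w) xi' t x i k \<and> H w x i k))
        \<longrightarrow> Phi A ell s (Psi w) xi t = Phi A ell s (Psi w) xi' t)"

definition width_bounded ::
  "'w measure \<Rightarrow> ('j \<Rightarrow> int set) \<Rightarrow> ('j \<Rightarrow> (int \<Rightarrow> 's) set) \<Rightarrow> ('j \<Rightarrow> 's)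
    \<Rightarrow> ('w \<Rightarrow> int \<Rightarrow> 'j \<Rightarrow> nat \<Rightarrow> ereal) \<Rightarrow> ('w \<Rightarrow> int \<Rightarrow> 'j \<Rightarrow> nat \<Rightarrow> bool) \<Rightarrow> ('w \<Rightarrow> real)
    \<Rightarrow> nat \<Rightarrow> nat \<Rightarrow> bool" where
  "width_bounded M A ell s Psi H T am ap \<longleftrightarrow>
     (\<forall>x i k. (\<lambda>w. H w x i k) \<in> measurable (Fwin M Psi am ap) (count_space UNIV)) \<and>
     (AE w in M. \<forall>x i k. H w x i k \<longrightarrow> (\<lambda>a. x + a) ` A i \<subseteq> {- int am .. int ap}) \<and>
     (\<exists>Theta :: 'w \<times> (int \<times> 'j \<times> nat \<Rightarrow> bool) \<Rightarrow> 's.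
        Theta \<in> measurable (Fwin M Psi am ap \<Otimes>\<^sub>M Pi\<^sub>M UNIV (\<lambda>_. count_space UNIV)) (count_space UNIV) \<and>
        (AE w in M. \<forall>t < T w. \<forall>xi.
           Phi A ell s (Psi w) xi t = Theta (w, \<lambda>(x,i,k). Perf A ell s (Psi w) xi t x i k \<and> H w x i k)))"

definition finite_width where
  "finite_width M A ell s Psi H T \<longleftrightarrow> (\<exists>am ap. width_bounded M A ell s Psi H T am ap)"

definition LambdaH ::
  "'w measure \<Rightarrow> ('j \<Rightarrow> int set) \<Rightarrow> ('w \<Rightarrow> int \<Rightarrow> 'j \<Rightarrow> nat \<Rightarrow> ereal) \<Rightarrow> ('w \<Rightarrow> int \<Rightarrow> 'j \<Rightarrow> nat \<Rightarrow> bool)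
    \<Rightarrow> real \<Rightarrow> ennreal" where
  "LambdaH M A Psi H lam =
     (\<integral>\<^sup>+ w. (\<integral>\<^sup>+ p. (case p of (x,i,k) \<Rightarrow>
         of_nat (card (A i)) * ennreal (exp (- lam * real_of_ereal (Psi w x i k))) * (if H w x i k then 1 else 0))
       \<partial>count_space UNIV) \<partial>M)"

end

theory Submission
  imports Defs
begin

text \<open>If the point \<open>\<Psi>(x,i,k) = -S\<^sub>k\<close> carries an ambiguity, then \<open>S\<^sub>k \<le> -T\<close>.  For
  \<open>0 \<le> \<mu> < \<lambda>\<close> and \<open>c > 0\<close>, distinguishing \<open>c k \<le> -T\<close> from \<open>c k > -T\<close> gives
  \<open>e\<^bsup>\<mu> S\<^sub>k\<^esup> \<le> e\<^bsup>-\<lambda> T\<^esup> a\<^sup>k + e\<^bsup>-S\<^sub>k\<^esup> b\<^sup>k\<close> with \<open>a = e\<^bsup>-(\<lambda>-\<mu>) c\<^esup> < 1\<close> and \<open>b = e\<^bsup>(\<mu>+1) c\<^esup>\<close>.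
  The first term has expectation \<open>\<Lambda>\<^sub>T(\<lambda>) a\<^sup>k\<close>; since \<open>S\<^sub>k\<close> is a sum of \<open>k+1\<close> independent
  \<open>Exp(r)\<close> gaps, the second has expectation \<open>(r/(r+1))\<^bsup>k+1\<^esup> b\<^sup>k\<close>, which is geometric once
  \<open>c\<close> is small.  Finite width confines the ambiguities to finitely many processes, so
  \<open>\<Lambda>\<^sub>H(\<lambda>')\<close> is bounded by a finite sum of convergent series.\<close>

lemma (in prob_space) nn_integral_exp_neg_exponential:
  assumes D: "distributed M lborel X (exponential_density l)" and l: "0 < l"
  shows "(\<integral>\<^sup>+w. ennreal (exp (- X w)) \<partial>M) = ennreal (l / (l + 1))"
proof -
  have density: "exponential_density l x * exp (- x) = l / (l + 1) * exponential_density (l + 1) x" for x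
    using l by (simp add: exponential_density_def field_simps flip: exp_add)
  have "(\<integral>\<^sup>+w. ennreal (exp (- X w)) \<partial>M) = (\<integral>\<^sup>+x. exponential_density l x * ennreal (exp (- x)) \<partial>lborel)"
    by (rule distributed_nn_integral[OF D, symmetric]) simp
  also have "\<dots> = (\<integral>\<^sup>+x. ennreal (l / (l + 1)) * exponential_density (l + 1) x \<partial>lborel)"
    using l by (intro nn_integral_cong) (simp flip: ennreal_mult add: density)
  also have "\<dots> = ennreal (l / (l + 1)) * emeasure (density lborel (exponential_density (l + 1))) UNIV"
    by (simp add: nn_integral_cmult emeasure_density)
  also have "\<dots> = ennreal (l / (l + 1))"
    using prob_space.emeasure_space_1[OF prob_space_exponential_density, of "l + 1"] l by simp
  finally show ?thesis .
qed

lemma (in prob_space) nn_integral_exp_neg_sum_indep_exponential: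
  assumes I: "finite I" and indep: "indep_vars (\<lambda>_. borel) X I"
    and D: "\<And>p. p \<in> I \<Longrightarrow> distributed M lborel (X p) (exponential_density l)" and l: "0 < l"
  shows "(\<integral>\<^sup>+w. ennreal (exp (- (\<Sum>p\<in>I. X p w))) \<partial>M) = ennreal ((l / (l + 1)) ^ card I)"
proof -
  have indep_exp: "indep_vars (\<lambda>_. borel) (\<lambda>p w. ennreal (exp (- X p w))) I"
    using indep by (rule indep_vars_compose2[where Y = "\<lambda>_ x. ennreal (exp (- x))"]) simp
  have "(\<integral>\<^sup>+w. ennreal (exp (- (\<Sum>p\<in>I. X p w))) \<partial>M) = (\<integral>\<^sup>+w. (\<Prod>p\<in>I. ennreal (exp (- X p w))) \<partial>M)"
    using I by (simp add: exp_sum prod_ennreal flip: sum_negf)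
  also have "\<dots> = (\<Prod>p\<in>I. \<integral>\<^sup>+w. ennreal (exp (- X p w)) \<partial>M)"
    by (rule indep_vars_nn_integral[OF I indep_exp]) simp
  also have "\<dots> = (\<Prod>p\<in>I. ennreal (l / (l + 1)))"
    by (simp add: nn_integral_exp_neg_exponential[OF D l])
  also have "\<dots> = ennreal ((l / (l + 1)) ^ card I)"
    using l by (simp add: ennreal_power)
  finally show ?thesis .
qed

lemma exp_le_two_regimes:
  fixes mu lam S t c :: real
  assumes "0 \<le> mu" "mu < lam" "0 \<le> S" "S \<le> t"
  shows "exp (mu * S) \<le> exp (lam * t) * exp (- (lam - mu) * c) ^ k + exp (- S) * exp ((mu + 1) * c) ^ k"
proof (cases "c * k \<le> t")
  case True
  have "mu * S \<le> mu * t" "(lam - mu) * (c * k) \<le> (lam - mu) * t"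
    using True assms by (auto intro: mult_left_mono)
  then have "exp (mu * S) \<le> exp (lam * t + k * (- (lam - mu) * c))"
    by (simp add: algebra_simps)
  then show ?thesis
    by (simp add: exp_add exp_of_nat_mult add_increasing2)
next
  case False
  then have "mu * S \<le> mu * (c * k)"
    using assms by (intro mult_left_mono) auto
  then have "exp (mu * S) \<le> exp (- S + k * ((mu + 1) * c))"
    using False assms by (simp add: algebra_simps)
  also have "\<dots> = exp (- S) * exp ((mu + 1) * c) ^ k"
    by (simp only: exp_add exp_of_nat_mult)
  finally show ?thesis
    by (simp add: add_increasing)
qed

lemma (in prob_space) summable_exp_moments_before_time:
  fixes S :: "nat \<Rightarrow> 'a \<Rightarrow> real" and T :: "'a \<Rightarrow> real"
  assumes [measurable]: "\<And>k. S k \<in> borel_measurable M" "T \<in> borel_measurable M"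
    and S_nonneg: "\<And>k. AE w in M. 0 \<le> S k w"
    and laplace: "\<And>k. (\<integral>\<^sup>+w. ennreal (exp (- S k w)) \<partial>M) \<le> ennreal (\<rho> ^ k)"
    and \<rho>: "0 \<le> \<rho>" "\<rho> < 1"
    and T_moment: "(\<integral>\<^sup>+w. ennreal (exp (- lam * T w)) \<partial>M) < \<infinity>"
    and mu: "0 \<le> mu" "mu < lam"
  shows "(\<Sum>k. \<integral>\<^sup>+w. ennreal (exp (mu * S k w)) * indicator {w. S k w \<le> - T w} w \<partial>M) < \<infinity>"
proof -
  \<comment> \<open>\<open>c\<close> is chosen so that \<open>b = 2 / (1 + \<rho>)\<close>, hence \<open>b \<rho> < 1\<close>.\<close>
  define c where "c = ln (2 / (1 + \<rho>)) / (mu + 1)"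
  define a where "a = exp (- (lam - mu) * c)"
  define b where "b = exp ((mu + 1) * c)"
  have "0 < c"
    using \<rho> mu by (simp add: c_def)
  then have a: "0 \<le> a" "a < 1"
    using mu by (auto simp: a_def mult_neg_pos)
  have b: "0 < b" "b * \<rho> < 1"
    using \<rho> mu by (auto simp: b_def c_def)
  obtain K where K: "(\<integral>\<^sup>+w. ennreal (exp (- lam * T w)) \<partial>M) = ennreal K" "0 \<le> K"
    using T_moment by (cases "\<integral>\<^sup>+w. ennreal (exp (- lam * T w)) \<partial>M") auto
  have "AE w in M. \<forall>k. 0 \<le> S k w"
    using S_nonneg by (simp add: AE_all_countable)
  then have "AE w in M. \<forall>k. ennreal (exp (mu * S k w)) * indicator {w. S k w \<le> - T w} w
      \<le> ennreal (exp (- lam * T w)) * ennreal (a ^ k) + ennreal (exp (- S k w)) * ennreal (b ^ k)"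
  proof (eventually_elim, intro allI)
    fix w k
    assume "\<forall>k. 0 \<le> S k w"
    then have "exp (mu * S k w) \<le> exp (- lam * T w) * a ^ k + exp (- S k w) * b ^ k"
      if "S k w \<le> - T w"
      using exp_le_two_regimes[OF mu _ that] by (simp add: a_def b_def)
    then show "ennreal (exp (mu * S k w)) * indicator {w. S k w \<le> - T w} w
        \<le> ennreal (exp (- lam * T w)) * ennreal (a ^ k) + ennreal (exp (- S k w)) * ennreal (b ^ k)"
      using a by (auto simp: b_def split: split_indicator simp flip: ennreal_mult ennreal_plus)
  qed
  then have "(\<Sum>k. \<integral>\<^sup>+w. ennreal (exp (mu * S k w)) * indicator {w. S k w \<le> - T w} w \<partial>M)
      \<le> (\<Sum>k. \<integral>\<^sup>+w. ennreal (exp (- lam * T w)) * ennreal (a ^ k) + ennreal (exp (- S k w)) * ennreal (b ^ k) \<partial>M)"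
    by (intro suminf_le summableI nn_integral_mono_AE) (auto elim: AE_mp)
  also have "\<dots> = (\<Sum>k. ennreal K * ennreal (a ^ k) + (\<integral>\<^sup>+w. ennreal (exp (- S k w)) \<partial>M) * ennreal (b ^ k))"
    using K(1) by (simp add: nn_integral_add nn_integral_multc)
  also have "\<dots> \<le> (\<Sum>k. ennreal K * ennreal (a ^ k) + ennreal (\<rho> ^ k) * ennreal (b ^ k))"
    by (intro suminf_le summableI add_mono mult_right_mono laplace order_refl) auto
  also have "\<dots> = (\<Sum>k. ennreal (K * a ^ k + (b * \<rho>) ^ k))"
    using K a b \<rho> by (simp add: power_mult_distrib mult.commute flip: ennreal_mult ennreal_plus)
  also have "\<dots> = ennreal (\<Sum>k. K * a ^ k + (b * \<rho>) ^ k)"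
    using K a b \<rho>
    by (intro suminf_ennreal2 summable_add summable_mult summable_geometric) auto
  also have "\<dots> < \<infinity>"
    by simp
  finally show ?thesis .
qed

lemma (in prob_space) exponential_distributed_AE_nonneg:
  assumes "distributed M lborel X (exponential_density l)"
  shows "AE w in M. 0 \<le> X w"
  by (subst distributed_AE2[OF assms]) (auto simp: exponential_density_def)

lemma poisson_family_measurable:
  assumes "poisson_family M r G" "0 < r i"
  shows "(\<lambda>w. G w x i m) \<in> borel_measurable M"
  using assms distributed_measurable[of M lborel "\<lambda>w. G w x i m"]
  by (auto simp: poisson_family_def measurable_lborel1)

lemma poisson_family_AE_nonneg:
  fixes G :: "'w \<Rightarrow> int \<Rightarrow> 'j::countable \<Rightarrow> nat \<Rightarrow> real"
  assumes "prob_space M" "poisson_family M r G"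
  shows "AE w in M. \<forall>x i m. 0 < r i \<longrightarrow> 0 \<le> G w x i m"
proof -
  interpret prob_space M by fact
  have "AE w in M. 0 < r i \<longrightarrow> 0 \<le> G w x i m" for x i m
    using assms(2) exponential_distributed_AE_nonneg[of "\<lambda>w. G w x i m" "r i"]
    by (cases "0 < r i") (auto simp: poisson_family_def)
  then show ?thesis
    by (simp add: AE_all_countable)
qed

lemma poisson_family_summable_exp_moments_before_time:
  fixes G :: "'w \<Rightarrow> int \<Rightarrow> 'j::countable \<Rightarrow> nat \<Rightarrow> real"
  assumes "prob_space M" and poisson: "poisson_family M r G" and ri: "0 < r i"
    and T: "T \<in> borel_measurable M" "(\<integral>\<^sup>+w. ennreal (exp (- lam * T w)) \<partial>M) < \<infinity>"
    and mu: "0 \<le> mu" "mu < lam"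
  shows "(\<Sum>k. \<integral>\<^sup>+w. ennreal (exp (mu * (\<Sum>m\<le>k. G w x i m)))
                  * indicator {w. (\<Sum>m\<le>k. G w x i m) \<le> - T w} w \<partial>M) < \<infinity>"
proof -
  interpret prob_space M by fact
  have indep: "indep_vars (\<lambda>_. borel) (\<lambda>(x, i, k) w. G w x i k) {(x, i, k). 0 < r i}"
    and D: "\<And>m. distributed M lborel (\<lambda>w. G w x i m) (exponential_density (r i))"
    using poisson ri by (auto simp: poisson_family_def)
  have [measurable]: "\<And>m. (\<lambda>w. G w x i m) \<in> borel_measurable M"
    using poisson_family_measurable[OF poisson ri] .
  have laplace: "(\<integral>\<^sup>+w. ennreal (exp (- (\<Sum>m\<le>k. G w x i m))) \<partial>M) \<le> ennreal ((r i / (r i + 1)) ^ k)" for k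
  proof -
    define I where "I = (\<lambda>m. (x, i, m)) ` {..k}"
    have inj: "inj_on (\<lambda>m. (x, i, m)) {..k}"
      by (auto simp: inj_on_def)
    have "(\<integral>\<^sup>+w. ennreal (exp (- (\<Sum>m\<le>k. G w x i m))) \<partial>M)
        = (\<integral>\<^sup>+w. ennreal (exp (- (\<Sum>p\<in>I. (\<lambda>(x, i, k) w. G w x i k) p w))) \<partial>M)"
      by (simp add: I_def sum.reindex[OF inj])
    also have "\<dots> = ennreal ((r i / (r i + 1)) ^ Suc k)"
      using ri D by (subst nn_integral_exp_neg_sum_indep_exponential[OF _ indep_vars_subset[OF indep]])
        (auto simp: I_def card_image[OF inj])
    also have "\<dots> \<le> ennreal ((r i / (r i + 1)) ^ k)"
      using ri by (intro ennreal_leI power_decreasing) auto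
    finally show ?thesis .
  qed
  have "AE w in M. 0 \<le> (\<Sum>m\<le>k. G w x i m)" for k
    using poisson_family_AE_nonneg[OF assms(1) poisson]
    by eventually_elim (simp add: ri sum_nonneg)
  with ri show ?thesis
    by (intro summable_exp_moments_before_time[OF _ T(1) _ laplace _ _ T(2) mu]) auto
qed

lemma nn_integral_count_space_fiber:
  fixes f :: "'a \<times> 'b \<times> nat \<Rightarrow> ennreal"
  shows "(\<integral>\<^sup>+p. (if (fst p, fst (snd p)) = (x, i) then f p else 0) \<partial>count_space UNIV) = (\<Sum>k. f (x, i, k))"
proof -
  have "(\<integral>\<^sup>+p. (if (fst p, fst (snd p)) = (x, i) then f p else 0) \<partial>count_space UNIV)
      = (\<integral>\<^sup>+p. (if (fst p, fst (snd p)) = (x, i) then f p else 0) \<partial>count_space (range (\<lambda>k. (x, i, k))))"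
    by (rule nn_integral_count_space_eq) auto
  also have "\<dots> = (\<integral>\<^sup>+k. f (x, i, k) \<partial>count_space UNIV)"
    by (subst nn_integral_bij_count_space[symmetric, where g = "\<lambda>k. (x, i, k)"])
      (auto simp: bij_betw_def inj_on_def)
  also have "\<dots> = (\<Sum>k. f (x, i, k))"
    by (rule nn_integral_count_space_nat)
  finally show ?thesis .
qed

lemma nn_integral_count_space_finite_support:
  fixes f :: "'a \<times> 'b \<times> nat \<Rightarrow> ennreal"
  assumes W: "finite W" and support: "\<And>x i k. (x, i) \<notin> W \<Longrightarrow> f (x, i, k) = 0"
  shows "(\<integral>\<^sup>+p. f p \<partial>count_space UNIV) = (\<Sum>(x, i)\<in>W. \<Sum>k. f (x, i, k))"
proof -
  have "f p = (\<Sum>z\<in>W. if (fst p, fst (snd p)) = z then f p else 0)" for p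
    using W support[of "fst p" "fst (snd p)" "snd (snd p)"] by auto
  then have "(\<integral>\<^sup>+p. f p \<partial>count_space UNIV)
      = (\<Sum>z\<in>W. \<integral>\<^sup>+p. (if (fst p, fst (snd p)) = z then f p else 0) \<partial>count_space UNIV)"
    by (subst nn_integral_sum[symmetric]) auto
  also have "\<dots> = (\<Sum>(x, i)\<in>W. \<Sum>k. f (x, i, k))"
    by (intro sum.cong refl) (clarify, rule nn_integral_count_space_fiber)
  finally show ?thesis .
qed

definition window_sites :: "('j \<Rightarrow> real) \<Rightarrow> ('j \<Rightarrow> int set) \<Rightarrow> int \<Rightarrow> int \<Rightarrow> (int \<times> 'j) set" where
  "window_sites r A lo hi = {(x, i). 0 < r i \<and> A i \<noteq> {} \<and> (\<lambda>a. x + a) ` A i \<subseteq> {lo..hi}}"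

lemma finite_window_sites: "finite (window_sites r A lo hi :: (int \<times> 'j::finite) set)"
proof -
  have "finite {x. 0 < r i \<and> A i \<noteq> {} \<and> (\<lambda>a. x + a) ` A i \<subseteq> {lo..hi}}" for i
  proof (cases "A i = {}")
    case False
    then obtain a where "a \<in> A i"
      by blast
    then have "{x. 0 < r i \<and> A i \<noteq> {} \<and> (\<lambda>a. x + a) ` A i \<subseteq> {lo..hi}} \<subseteq> {lo - a..hi - a}"
      by (fastforce simp: image_subset_iff)
    then show ?thesis
      by (rule finite_subset) simp
  qed simp
  then have "finite (\<Union>i. (\<lambda>x. (x, i)) ` {x. 0 < r i \<and> A i \<noteq> {} \<and> (\<lambda>a. x + a) ` A i \<subseteq> {lo..hi}})"
    by simp
  then show ?thesis
    unfolding window_sites_def by (rule finite_subset[rotated]) force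
qed

lemma pts_not_less_ereal:
  assumes "0 \<le> r i" "\<not> pts r G w x i k < ereal t"
  shows "0 < r i" "pts r G w x i k = ereal (- (\<Sum>m\<le>k. G w x i m))" "(\<Sum>m\<le>k. G w x i m) \<le> - t"
  using assms by (auto simp: pts_def split: if_splits)

lemma LambdaH_integrand_le_window_sum:
  fixes G :: "'w \<Rightarrow> int \<Rightarrow> 'j::finite \<Rightarrow> nat \<Rightarrow> real"
  assumes r: "\<forall>i. 0 \<le> r i" and C: "\<And>i. card (A i) \<le> C" and lam': "lam' \<le> mu"
    and before: "\<forall>x i k. pts r G w x i k < ereal (T w) \<longrightarrow> \<not> H w x i k"
    and window: "\<forall>x i k. H w x i k \<longrightarrow> (\<lambda>a. x + a) ` A i \<subseteq> {lo..hi}"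
    and G_nonneg: "\<forall>x i m. 0 < r i \<longrightarrow> 0 \<le> G w x i m"
  shows "(\<integral>\<^sup>+p. (case p of (x, i, k) \<Rightarrow> of_nat (card (A i))
            * ennreal (exp (- lam' * real_of_ereal (pts r G w x i k))) * (if H w x i k then 1 else 0))
          \<partial>count_space UNIV)
      \<le> (\<Sum>(x, i)\<in>window_sites r A lo hi. \<Sum>k. of_nat C * (ennreal (exp (mu * (\<Sum>m\<le>k. G w x i m)))
            * indicator {w. (\<Sum>m\<le>k. G w x i m) \<le> - T w} w))"
    (is "(\<integral>\<^sup>+p. ?f p \<partial>count_space UNIV) \<le> _")
proof -
  have ambiguity: "0 < r i \<and> (x, i) \<in> window_sites r A lo hi \<and> (\<Sum>m\<le>k. G w x i m) \<le> - T w \<and>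
      pts r G w x i k = ereal (- (\<Sum>m\<le>k. G w x i m))"
    if "H w x i k" "A i \<noteq> {}" for x i k
  proof -
    have "\<not> pts r G w x i k < ereal (T w)" "(\<lambda>a. x + a) ` A i \<subseteq> {lo..hi}"
      using that before window by blast+
    with pts_not_less_ereal[of r i G w x k "T w"] r that(2) show ?thesis
      by (simp add: window_sites_def)
  qed
  have pointwise: "?f (x, i, k) \<le> of_nat C * (ennreal (exp (mu * (\<Sum>m\<le>k. G w x i m)))
      * indicator {w. (\<Sum>m\<le>k. G w x i m) \<le> - T w} w)" for x i k
  proof (cases "H w x i k \<and> A i \<noteq> {}")
    case True
    with ambiguity have "0 < r i" "(\<Sum>m\<le>k. G w x i m) \<le> - T w"
        "pts r G w x i k = ereal (- (\<Sum>m\<le>k. G w x i m))"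
      by auto
    moreover have "lam' * (\<Sum>m\<le>k. G w x i m) \<le> mu * (\<Sum>m\<le>k. G w x i m)"
      using calculation(1) G_nonneg lam' by (intro mult_right_mono sum_nonneg) auto
    ultimately show ?thesis
      using True C[of i] by (auto simp: indicator_def intro!: mult_mono ennreal_leI)
  qed auto
  have "(\<integral>\<^sup>+p. ?f p \<partial>count_space UNIV) = (\<Sum>(x, i)\<in>window_sites r A lo hi. \<Sum>k. ?f (x, i, k))"
    using ambiguity by (intro nn_integral_count_space_finite_support[OF finite_window_sites]) fastforce
  also have "\<dots> \<le> (\<Sum>(x, i)\<in>window_sites r A lo hi. \<Sum>k. of_nat C * (ennreal (exp (mu * (\<Sum>m\<le>k. G w x i m)))
            * indicator {w. (\<Sum>m\<le>k. G w x i m) \<le> - T w} w))"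
    by (intro sum_mono, clarify, intro suminf_le summableI) (use pointwise in simp)
  finally show ?thesis .
qed

lemma (in prob_space) nn_integral_sum_suminf_less_top:
  fixes f :: "'x \<Rightarrow> 'y \<Rightarrow> nat \<Rightarrow> 'a \<Rightarrow> ennreal"
  assumes W: "finite W"
    and [measurable]: "\<And>x i k. (x, i) \<in> W \<Longrightarrow> f x i k \<in> borel_measurable M"
    and summable: "\<And>x i. (x, i) \<in> W \<Longrightarrow> (\<Sum>k. \<integral>\<^sup>+w. f x i k w \<partial>M) < \<infinity>"
  shows "(\<integral>\<^sup>+w. (\<Sum>(x, i)\<in>W. \<Sum>k. of_nat C * f x i k w) \<partial>M) < \<infinity>"
proof -
  have "(\<integral>\<^sup>+w. (\<Sum>(x, i)\<in>W. \<Sum>k. of_nat C * f x i k w) \<partial>M)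
      = (\<Sum>(x, i)\<in>W. of_nat C * (\<Sum>k. \<integral>\<^sup>+w. f x i k w \<partial>M))"
    by (subst nn_integral_sum) (auto simp: nn_integral_suminf nn_integral_cmult intro!: sum.cong)
  also have "\<dots> < \<infinity>"
    using W summable by (auto simp: ennreal_mult_less_top of_nat_less_top)
  finally show ?thesis .
qed

theorem lemma4p13:
  fixes M :: "'w measure"
    and G :: "'w \<Rightarrow> int \<Rightarrow> 'j::finite \<Rightarrow> nat \<Rightarrow> real"
    and A :: "'j \<Rightarrow> int set"
    and ell :: "'j \<Rightarrow> (int \<Rightarrow> 's::finite) set"
    and s :: "'j \<Rightarrow> 's"
    and r :: "'j \<Rightarrow> real"
    and H :: "'w \<Rightarrow> int \<Rightarrow> 'j \<Rightarrow> nat \<Rightarrow> bool"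
    and T :: "'w \<Rightarrow> real"
    and lam lam' :: real
  assumes "prob_space M"
    and "\<forall>i. finite (A i)"
    and "\<forall>i. ell i \<subseteq> extensional (A i)"
    and "\<forall>i. 0 \<le> r i"
    and "poisson_family M r G"
    and "coupling_time_amb M A ell s (pts r G) H T"
    and "finite_width M A ell s (pts r G) H T"
    and "0 < lam"
    and "(\<integral>\<^sup>+ w. ennreal (exp (- lam * T w)) \<partial>M) < \<infinity>"
    and "lam' < lam"
  shows "LambdaH M A (pts r G) H lam' < \<infinity>"
proof -
  interpret prob_space M by fact
  obtain am ap where "width_bounded M A ell s (pts r G) H T am ap"
    using assms(7) by (auto simp: finite_width_def)
  then have window: "AE w in M. \<forall>x i k. H w x i k \<longrightarrow> (\<lambda>a. x + a) ` A i \<subseteq> {- int am..int ap}"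
    by (simp add: width_bounded_def)
  have [measurable]: "T \<in> borel_measurable M"
    and before: "AE w in M. \<forall>x i k. pts r G w x i k < ereal (T w) \<longrightarrow> \<not> H w x i k"
    using assms(6) by (auto simp: coupling_time_amb_def)
  define mu where "mu = max lam' 0"
  define f where "f x i k w = ennreal (exp (mu * (\<Sum>m\<le>k. G w x i m)))
    * indicator {w. (\<Sum>m\<le>k. G w x i m) \<le> - T w} w" for x i k w
  have "LambdaH M A (pts r G) H lam' \<le> (\<integral>\<^sup>+w. (\<Sum>(x, i)\<in>window_sites r A (- int am) (int ap).
      \<Sum>k. of_nat (Max (range (\<lambda>i. card (A i)))) * f x i k w) \<partial>M)"
    unfolding LambdaH_def f_def
    using before window poisson_family_AE_nonneg[OF assms(1,5)]
    by (intro nn_integral_mono_AE, eventually_elim)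
      (rule LambdaH_integrand_le_window_sum, auto simp: mu_def assms(4))
  also have "\<dots> < \<infinity>"
    using assms(8,10) poisson_family_measurable[OF assms(5)]
      poisson_family_summable_exp_moments_before_time[OF assms(1,5) _ _ assms(9), of _ mu]
    by (intro nn_integral_sum_suminf_less_top finite_window_sites)
      (auto simp: window_sites_def f_def mu_def)
  finally show ?thesis .
qed

end
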